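(* Let $(G,\lambda),s,t$ be a minimum counter-example. Then $G$ is 2-connected, and every multiedge incident to $s$ or to $t$ has multiplicity $1$.
   Context: Graphs are finite, loopless, and may have parallel edges. The multiplicity of a pair $x,y$ is the number of edges with endpoints $x,y$; a pair of multiplicity at least 1 is a multiedge. A temporal graph is a pair $(G,\lambda)$ with $\lambda:E(G)\to\mathbb{Z}_{>0}$. A temporal $s,t$-path is an $s,t$-path $(s=v_1,e_1,\dots,e_{k-1},v_k=t)$ of $G$ (no repeated vertices) with $\lambda(e_1)\le\dots\le\lambda(e_{k-1})$. Two temporal $s,t$-paths are disjoint if they share no vertex other than $s,t$. For distinct non-adjacent $s,t$, a temporal $s,t$-vertex cut is a set $S\subseteq V(G)\setminus\{s,t\}$ such that $G-S$ (with $\lambda$ restricted) has no temporal $s,t$-path. $p_{G,\lambda}(s,t)$ is the maximum number of pairwise disjoint temporal $s,t$-paths and $c_{G,\lambda}(s,t)$ the minimum size of a temporal $s,t$-vertex cut. m-subdividing a multiedge $xy$ of multiplicity $k$: delete the $k$ edges between $x,y$, add a new vertex $z$, $k$ parallel edges $xz$ and $k$ parallel edges $zy$. An m-subdivision of $H$ is a graph obtained from $H$ by a finite (possibly empty) sequence of such operations; $H$ is an m-topological minor of $G$ if $G$ has a subgraph isomorphic to an m-subdivision of $H$. $\mathcal{F}_3$ is the gem: simple graph on $s,u,v,t,x$ with edges $su,uv,vt,xs,xu,xv,xt$. $\mathcal{F}_1$: vertices $s,u,v,t,w,w'$, simple edges $su,uv,vt,sw,wt,uw',w'v$, and exactly two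 parallel edges between $w,w'$. $\mathcal{F}_2$: vertices $s,u,v,t,w,w'$, simple edges $su,uv,vt,sw,uw,w'v,w't$, and exactly two parallel edges between $w,w'$. A minimum counter-example is a triple $(G,\lambda),s,t$ with $s,t\in V(G)$ distinct and non-adjacent, such that $p_{G,\lambda}(s,t)<c_{G,\lambda}(s,t)$, none of $\mathcal{F}_1,\mathcal{F}_2,\mathcal{F}_3$ is an m-topological minor of $G$, and $|V(G)|+|E(G)|$ is minimum among all such triples. *)

theory Defs
  imports Main
begin

text \<open>Vertices and edge identifiers are natural numbers;
  every finite multigraph is isomorphic to one of this form, and all notions below are
  invariant under isomorphism.\<close>

record mgraph =
  verts :: "nat set"
  edges :: "nat set"
  ends  :: "nat \<Rightarrow> nat set"

definition wf_mgraph :: "mgraph \<Rightarrow> bool" where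
  "wf_mgraph G \<longleftrightarrow> finite (verts G) \<and> finite (edges G) \<and>
     (\<forall>e\<in>edges G. ends G e \<subseteq> verts G \<and> card (ends G e) = 2)"

definition gsize :: "mgraph \<Rightarrow> nat" where
  "gsize G = card (verts G) + card (edges G)"

definition mult :: "mgraph \<Rightarrow> nat \<Rightarrow> nat \<Rightarrow> nat" where
  "mult G x y = card {e \<in> edges G. ends G e = {x, y}}"

definition adj :: "mgraph \<Rightarrow> nat \<Rightarrow> nat \<Rightarrow> bool" where
  "adj G x y \<longleftrightarrow> (\<exists>e\<in>edges G. ends G e = {x, y})"

definition temporal_labelling :: "mgraph \<Rightarrow> (nat \<Rightarrow> nat) \<Rightarrow> bool" where
  "temporal_labelling G lam \<longleftrightarrow> (\<forall>e\<in>edges G. lam e > 0)"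

definition del_verts :: "mgraph \<Rightarrow> nat set \<Rightarrow> mgraph" where
  "del_verts G S = G\<lparr> verts := verts G - S,
                      edges := {e \<in> edges G. ends G e \<inter> S = {}} \<rparr>"

definition tpath :: "mgraph \<Rightarrow> (nat \<Rightarrow> nat) \<Rightarrow> nat \<Rightarrow> nat \<Rightarrow> nat list \<Rightarrow> nat list \<Rightarrow> bool" where
  "tpath G lam s t vs es \<longleftrightarrow>
     vs \<noteq> [] \<and> hd vs = s \<and> last vs = t \<and> distinct vs \<and> set vs \<subseteq> verts G \<and>
     length vs = length es + 1 \<and> set es \<subseteq> edges G \<and>
     (\<forall>i < length es. ends G (es ! i) = {vs ! i, vs ! Suc i}) \<and>
     sorted (map lam es)"

definition p_num :: "mgraph \<Rightarrow> (nat \<Rightarrow> nat) \<Rightarrow> nat \<Rightarrow> nat \<Rightarrow> nat" where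
  "p_num G lam s t = (GREATEST k. \<exists>P :: (nat list \<times> nat list) list.
      length P = k \<and> (\<forall>q\<in>set P. tpath G lam s t (fst q) (snd q)) \<and>
      (\<forall>i<k. \<forall>j<k. i \<noteq> j \<longrightarrow> set (fst (P ! i)) \<inter> set (fst (P ! j)) \<subseteq> {s, t}))"

definition temporal_cut :: "mgraph \<Rightarrow> (nat \<Rightarrow> nat) \<Rightarrow> nat \<Rightarrow> nat \<Rightarrow> nat set \<Rightarrow> bool" where
  "temporal_cut G lam s t S \<longleftrightarrow> S \<subseteq> verts G - {s, t} \<and>
      \<not> (\<exists>vs es. tpath (del_verts G S) lam s t vs es)"

definition c_num :: "mgraph \<Rightarrow> (nat \<Rightarrow> nat) \<Rightarrow> nat \<Rightarrow> nat \<Rightarrow> nat" where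
  "c_num G lam s t = (LEAST k. \<exists>S. temporal_cut G lam s t S \<and> card S = k)"

definition msub_step :: "mgraph \<Rightarrow> mgraph \<Rightarrow> bool" where
  "msub_step H H' \<longleftrightarrow> (\<exists>x y z A B.
     x \<in> verts H \<and> y \<in> verts H \<and> x \<noteq> y \<and> mult H x y \<ge> 1 \<and> z \<notin> verts H \<and>
     verts H' = insert z (verts H) \<and>
     finite A \<and> finite B \<and> card A = mult H x y \<and> card B = mult H x y \<and>
     A \<inter> B = {} \<and>
     A \<inter> {e \<in> edges H. ends H e \<noteq> {x, y}} = {} \<and>
     B \<inter> {e \<in> edges H. ends H e \<noteq> {x, y}} = {} \<and>
     edges H' = {e \<in> edges H. ends H e \<noteq> {x, y}} \<union> A \<union> B \<and>
     (\<forall>e \<in> {e \<in> edges H. ends H e \<noteq> {x, y}}. ends H' e = ends H e) \<and>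
     (\<forall>e\<in>A. ends H' e = {x, z}) \<and> (\<forall>e\<in>B. ends H' e = {z, y}))"

definition m_subdivision :: "mgraph \<Rightarrow> mgraph \<Rightarrow> bool" where
  "m_subdivision H H' \<longleftrightarrow> msub_step\<^sup>*\<^sup>* H H'"

definition has_subgraph_iso :: "mgraph \<Rightarrow> mgraph \<Rightarrow> bool" where
  "has_subgraph_iso G H' \<longleftrightarrow> (\<exists>\<phi> \<psi>.
     inj_on \<phi> (verts H') \<and> \<phi> ` verts H' \<subseteq> verts G \<and>
     inj_on \<psi> (edges H') \<and> \<psi> ` edges H' \<subseteq> edges G \<and>
     (\<forall>e\<in>edges H'. ends G (\<psi> e) = \<phi> ` ends H' e))"

definition m_top_minor :: "mgraph \<Rightarrow> mgraph \<Rightarrow> bool" where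
  "m_top_minor H G \<longleftrightarrow> (\<exists>H'. m_subdivision H H' \<and> has_subgraph_iso G H')"

definition list_graph :: "nat set \<Rightarrow> nat set list \<Rightarrow> mgraph" where
  "list_graph V L = \<lparr> verts = V, edges = {..<length L},
                      ends = (\<lambda>e. if e < length L then L ! e else {}) \<rparr>"

text \<open>s=0, u=1, v=2, t=3, w=4, w'=5\<close>
definition F1 :: mgraph where
  "F1 = list_graph {0,1,2,3,4,5}
     [{0,1},{1,2},{2,3},{0,4},{4,3},{1,5},{5,2},{4,5},{4,5}]"

definition F2 :: mgraph where
  "F2 = list_graph {0,1,2,3,4,5}
     [{0,1},{1,2},{2,3},{0,4},{1,4},{5,2},{5,3},{4,5},{4,5}]"

text \<open>gem: s=0, u=1, v=2, t=3, x=4\<close>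
definition F3 :: mgraph where
  "F3 = list_graph {0,1,2,3,4}
     [{0,1},{1,2},{2,3},{4,0},{4,1},{4,2},{4,3}]"

definition counter_example :: "mgraph \<Rightarrow> (nat \<Rightarrow> nat) \<Rightarrow> nat \<Rightarrow> nat \<Rightarrow> bool" where
  "counter_example G lam s t \<longleftrightarrow>
     wf_mgraph G \<and> temporal_labelling G lam \<and>
     s \<in> verts G \<and> t \<in> verts G \<and> s \<noteq> t \<and> \<not> adj G s t \<and>
     p_num G lam s t < c_num G lam s t \<and>
     \<not> m_top_minor F1 G \<and> \<not> m_top_minor F2 G \<and> \<not> m_top_minor F3 G"

definition min_counter_example :: "mgraph \<Rightarrow> (nat \<Rightarrow> nat) \<Rightarrow> nat \<Rightarrow> nat \<Rightarrow> bool" where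
  "min_counter_example G lam s t \<longleftrightarrow> counter_example G lam s t \<and>
     (\<forall>G' lam' s' t'. counter_example G' lam' s' t' \<longrightarrow> gsize G \<le> gsize G')"

definition connected_on :: "mgraph \<Rightarrow> nat set \<Rightarrow> bool" where
  "connected_on G W \<longleftrightarrow>
     (\<forall>x\<in>W. \<forall>y\<in>W. (\<lambda>a b. a \<in> W \<and> b \<in> W \<and> adj G a b)\<^sup>*\<^sup>* x y)"

definition two_connected :: "mgraph \<Rightarrow> bool" where
  "two_connected G \<longleftrightarrow> card (verts G) \<ge> 3 \<and> connected_on G (verts G) \<and>
     (\<forall>v\<in>verts G. connected_on G (verts G - {v}))"

end

theory Submission
  imports Defs
begin

text \<open>If a smaller subgraph H of G containing s and t keeps every temporal s,t-path of G
  (as a vertex sequence), then H is again a counter-example: disjoint path families of H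
  live in G, cuts of G are cuts of H, and m-topological minors of H are minors of G.
  So in a minimum counter-example every vertex lies on a temporal s,t-path, and no single
  vertex meets all of them because c > p \<ge> 1.  A vertex z \<noteq> v of such a path is joined
  within G - v to one of its ends, and s, t are joined in G - v, which gives 2-connectivity.\<close>

definition subgraph :: "mgraph \<Rightarrow> mgraph \<Rightarrow> bool" where
  "subgraph H G \<longleftrightarrow> verts H \<subseteq> verts G \<and> edges H \<subseteq> edges G \<and> ends H = ends G \<and>
     (\<forall>e\<in>edges H. ends G e \<subseteq> verts H)"

lemma wf_mgraph_subgraph: "wf_mgraph G \<Longrightarrow> subgraph H G \<Longrightarrow> wf_mgraph H"
  unfolding wf_mgraph_def subgraph_def by (metis finite_subset subsetD)

lemma temporal_labelling_subgraph:
  "temporal_labelling G lam \<Longrightarrow> subgraph H G \<Longrightarrow> temporal_labelling H lam"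
  unfolding temporal_labelling_def subgraph_def by blast

lemma adj_subgraph: "subgraph H G \<Longrightarrow> adj H x y \<Longrightarrow> adj G x y"
  unfolding adj_def subgraph_def by auto

lemma tpath_subgraph: "subgraph H G \<Longrightarrow> tpath H lam s t vs es \<Longrightarrow> tpath G lam s t vs es"
  unfolding tpath_def subgraph_def by auto

lemma has_subgraph_iso_subgraph:
  "subgraph H G \<Longrightarrow> has_subgraph_iso H F \<Longrightarrow> has_subgraph_iso G F"
  unfolding has_subgraph_iso_def subgraph_def by (metis order_trans)

lemma m_top_minor_subgraph: "subgraph H G \<Longrightarrow> m_top_minor F H \<Longrightarrow> m_top_minor F G"
  unfolding m_top_minor_def using has_subgraph_iso_subgraph by blast

lemma subgraph_del_verts: "wf_mgraph G \<Longrightarrow> subgraph (del_verts G S) G"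
  unfolding subgraph_def del_verts_def wf_mgraph_def by auto

lemma subgraph_del_edge: "wf_mgraph G \<Longrightarrow> subgraph (G\<lparr>edges := edges G - {e}\<rparr>) G"
  unfolding subgraph_def wf_mgraph_def by auto

lemma gsize_del_vertex:
  assumes "wf_mgraph G" "x \<in> verts G"
  shows "gsize (del_verts G {x}) < gsize G"
proof -
  have fin: "finite (verts G)" "finite (edges G)" using assms(1) by (auto simp: wf_mgraph_def)
  have "card (verts G - {x}) < card (verts G)" using fin(1) assms(2) by (rule card_Diff1_less)
  moreover have "card {e \<in> edges G. ends G e \<inter> {x} = {}} \<le> card (edges G)"
    using fin by (intro card_mono) auto
  ultimately show ?thesis unfolding gsize_def del_verts_def by simp
qed

lemma gsize_del_edge:
  assumes "wf_mgraph G" "e \<in> edges G"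
  shows "gsize (G\<lparr>edges := edges G - {e}\<rparr>) < gsize G"
  using assms card_Diff1_less[of "edges G" e] unfolding gsize_def wf_mgraph_def by simp

lemma tpath_del_verts_iff:
  "tpath (del_verts G S) lam s t vs es \<longleftrightarrow> tpath G lam s t vs es \<and> set vs \<inter> S = {}"
proof
  assume "tpath G lam s t vs es \<and> set vs \<inter> S = {}"
  then have tp: "tpath G lam s t vs es" and avoid: "set vs \<inter> S = {}" by auto
  have "ends G e \<inter> S = {}" if "e \<in> set es" for e
  proof -
    obtain i where i: "i < length es" "e = es ! i" using \<open>e \<in> set es\<close> by (auto simp: in_set_conv_nth)
    then have "ends G e = {vs ! i, vs ! Suc i}" "Suc i < length vs" using tp by (auto simp: tpath_def)
    moreover have "vs ! i \<notin> S" "vs ! Suc i \<notin> S"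
      using avoid \<open>Suc i < length vs\<close> by (meson Suc_lessD disjoint_iff nth_mem)+
    ultimately show ?thesis by auto
  qed
  then show "tpath (del_verts G S) lam s t vs es"
    using tp avoid unfolding tpath_def del_verts_def by auto
qed (auto simp: tpath_def del_verts_def)

lemma tpath_first_last:
  assumes "tpath G lam s t vs es"
  shows "vs ! 0 = s" "vs ! (length vs - 1) = t" "length es = length vs - 1"
  using assms by (auto simp: tpath_def hd_conv_nth last_conv_nth)

lemma tpath_nth_eq_source:
  assumes "tpath G lam s t vs es" "i < length vs"
  shows "vs ! i = s \<longleftrightarrow> i = 0"
proof -
  have "distinct vs" "0 < length vs" using assms by (auto simp: tpath_def)
  then show ?thesis
    using nth_eq_iff_index_eq[of vs i 0] assms(2) tpath_first_last(1)[OF assms(1)] by metis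
qed

lemma tpath_nth_eq_target:
  assumes "tpath G lam s t vs es" "i < length vs"
  shows "vs ! i = t \<longleftrightarrow> i = length vs - 1"
proof -
  have "distinct vs" "length vs - 1 < length vs" using assms by (auto simp: tpath_def)
  then show ?thesis
    using nth_eq_iff_index_eq[of vs i "length vs - 1"] assms(2) tpath_first_last(2)[OF assms(1)]
    by metis
qed

lemma tpath_length_ge_3:
  assumes tp: "tpath G lam s t vs es" and "s \<noteq> t" "\<not> adj G s t"
  shows "3 \<le> length vs"
proof (rule ccontr)
  assume "\<not> 3 \<le> length vs"
  moreover have "length vs \<noteq> 1" using tp \<open>s \<noteq> t\<close> by (auto simp: tpath_def length_Suc_conv)
  moreover have "length vs \<noteq> 0" using tp by (auto simp: tpath_def)
  ultimately have "length vs = 2" by linarith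
  then have "es ! 0 \<in> edges G" "ends G (es ! 0) = {s, t}"
    using tp tpath_first_last[OF tp] by (auto simp: tpath_def)
  then show False using \<open>\<not> adj G s t\<close> by (auto simp: adj_def)
qed

definition has_disjoint_tpaths :: "mgraph \<Rightarrow> (nat \<Rightarrow> nat) \<Rightarrow> nat \<Rightarrow> nat \<Rightarrow> nat \<Rightarrow> bool" where
  "has_disjoint_tpaths G lam s t k \<longleftrightarrow> (\<exists>P :: (nat list \<times> nat list) list.
      length P = k \<and> (\<forall>q\<in>set P. tpath G lam s t (fst q) (snd q)) \<and>
      (\<forall>i<k. \<forall>j<k. i \<noteq> j \<longrightarrow> set (fst (P ! i)) \<inter> set (fst (P ! j)) \<subseteq> {s, t}))"

lemma p_num_eq_Greatest: "p_num G lam s t = Greatest (has_disjoint_tpaths G lam s t)"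
  by (simp add: p_num_def has_disjoint_tpaths_def[abs_def])

lemma has_disjoint_tpaths_subgraph:
  "subgraph H G \<Longrightarrow> has_disjoint_tpaths H lam s t k \<Longrightarrow> has_disjoint_tpaths G lam s t k"
  unfolding has_disjoint_tpaths_def using tpath_subgraph by blast

lemma has_disjoint_tpaths_le_card:
  assumes wf: "wf_mgraph G" and st: "s \<noteq> t" "\<not> adj G s t"
    and "has_disjoint_tpaths G lam s t k"
  shows "k \<le> card (verts G)"
proof -
  obtain P where P: "length P = k" "\<And>i. i < k \<Longrightarrow> tpath G lam s t (fst (P ! i)) (snd (P ! i))"
    "\<And>i j. i < k \<Longrightarrow> j < k \<Longrightarrow> i \<noteq> j \<Longrightarrow> set (fst (P ! i)) \<inter> set (fst (P ! j)) \<subseteq> {s, t}"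
    using assms(4) unfolding has_disjoint_tpaths_def by (metis nth_mem)
  \<comment> \<open>the second vertex of a path is an inner vertex, so it identifies the path\<close>
  define second where "second i = fst (P ! i) ! 1" for i
  have second: "second i \<in> set (fst (P ! i)) - {s, t}" "second i \<in> verts G" if "i < k" for i
  proof -
    let ?vs = "fst (P ! i)"
    have tp: "tpath G lam s t ?vs (snd (P ! i))" using P(2) that .
    have len: "3 \<le> length ?vs" using tpath_length_ge_3[OF tp st] .
    have "set ?vs \<subseteq> verts G" using tp by (auto simp: tpath_def)
    moreover have "?vs ! 1 \<noteq> s" "?vs ! 1 \<noteq> t"
      using tpath_nth_eq_source[OF tp, of 1] tpath_nth_eq_target[OF tp, of 1] len by auto
    ultimately show "second i \<in> set ?vs - {s, t}" "second i \<in> verts G"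
      using len tpath_first_last[OF tp] unfolding second_def by auto
  qed
  have "inj_on second {..<k}"
  proof (rule inj_onI, rule ccontr)
    fix i j assume ij: "i \<in> {..<k}" "j \<in> {..<k}" "second i = second j" "i \<noteq> j"
    then have "second i \<in> set (fst (P ! i)) \<inter> set (fst (P ! j)) - {s, t}"
      using second(1) by (metis Diff_iff IntI lessThan_iff)
    then show False using P(3) ij by blast
  qed
  moreover have "second ` {..<k} \<subseteq> verts G" using second(2) by auto
  moreover have "finite (verts G)" using wf by (simp add: wf_mgraph_def)
  ultimately have "card {..<k} \<le> card (verts G)" by (rule card_inj_on_le)
  then show ?thesis by simp
qed

lemma has_disjoint_tpaths_le_p_num:
  "wf_mgraph G \<Longrightarrow> s \<noteq> t \<Longrightarrow> \<not> adj G s t \<Longrightarrow> has_disjoint_tpaths G lam s t k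
    \<Longrightarrow> k \<le> p_num G lam s t"
  unfolding p_num_eq_Greatest by (rule Greatest_le_nat) (auto intro: has_disjoint_tpaths_le_card)

lemma p_num_subgraph_le:
  assumes wf: "wf_mgraph G" and st: "s \<noteq> t" "\<not> adj G s t" and H: "subgraph H G"
  shows "p_num H lam s t \<le> p_num G lam s t"
proof -
  have bound: "k \<le> card (verts G)" if "has_disjoint_tpaths H lam s t k" for k
    using has_disjoint_tpaths_le_card[OF wf st] has_disjoint_tpaths_subgraph[OF H that] .
  have "has_disjoint_tpaths H lam s t 0" by (simp add: has_disjoint_tpaths_def)
  then have "has_disjoint_tpaths H lam s t (p_num H lam s t)"
    unfolding p_num_eq_Greatest using bound by (rule GreatestI_nat)
  then show ?thesis using has_disjoint_tpaths_le_p_num[OF wf st] has_disjoint_tpaths_subgraph[OF H] by blast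
qed

lemma p_num_ge_1:
  assumes "wf_mgraph G" "s \<noteq> t" "\<not> adj G s t" "tpath G lam s t vs es"
  shows "1 \<le> p_num G lam s t"
proof (rule has_disjoint_tpaths_le_p_num[OF assms(1-3)])
  show "has_disjoint_tpaths G lam s t 1"
    unfolding has_disjoint_tpaths_def using assms(4) by (intro exI[of _ "[(vs, es)]"]) simp
qed

lemma c_num_le_card: "temporal_cut G lam s t S \<Longrightarrow> c_num G lam s t \<le> card S"
  unfolding c_num_def by (rule Least_le) blast

lemma temporal_cut_inner_verts:
  assumes "s \<noteq> t" "\<not> adj G s t"
  shows "temporal_cut G lam s t (verts G - {s, t})"
  unfolding temporal_cut_def
proof (intro conjI notI)
  assume "\<exists>vs es. tpath (del_verts G (verts G - {s, t})) lam s t vs es"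
  then obtain vs es where tp: "tpath G lam s t vs es" and "set vs \<inter> (verts G - {s, t}) = {}"
    by (auto simp: tpath_del_verts_iff)
  moreover have "distinct vs" "set vs \<subseteq> verts G" using tp by (auto simp: tpath_def)
  ultimately have "set vs \<subseteq> {s, t}" by blast
  then have "length vs \<le> card {s, t}"
    using \<open>distinct vs\<close> by (metis card_mono distinct_card finite.emptyI finite.insertI)
  then show False using tpath_length_ge_3[OF tp assms] assms(1) by simp
qed simp

lemma c_num_attained:
  assumes "s \<noteq> t" "\<not> adj G s t"
  obtains S where "temporal_cut G lam s t S" "card S = c_num G lam s t"
proof -
  have "\<exists>S. temporal_cut G lam s t S \<and> card S = card (verts G - {s, t})"
    using temporal_cut_inner_verts[OF assms] by blast
  then show ?thesis
    using LeastI[of "\<lambda>k. \<exists>S. temporal_cut G lam s t S \<and> card S = k"] that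
    unfolding c_num_def by blast
qed

lemma temporal_cut_subgraph:
  assumes H: "subgraph H G" and cut: "temporal_cut H lam s t S"
    and keep: "\<And>vs es. tpath G lam s t vs es \<Longrightarrow> \<exists>es'. tpath H lam s t vs es'"
  shows "temporal_cut G lam s t S"
  unfolding temporal_cut_def
proof (intro conjI notI)
  show "S \<subseteq> verts G - {s, t}" using H cut by (auto simp: temporal_cut_def subgraph_def)
  assume "\<exists>vs es. tpath (del_verts G S) lam s t vs es"
  then obtain vs es where "tpath G lam s t vs es" "set vs \<inter> S = {}"
    by (auto simp: tpath_del_verts_iff)
  then obtain es' where "tpath H lam s t vs es'" "set vs \<inter> S = {}" using keep by blast
  then show False using cut by (auto simp: temporal_cut_def tpath_del_verts_iff)
qed

lemma min_counter_example_gsize_le: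
  assumes m: "min_counter_example G lam s t" and H: "subgraph H G"
    and st_H: "s \<in> verts H" "t \<in> verts H"
    and keep: "\<And>vs es. tpath G lam s t vs es \<Longrightarrow> \<exists>es'. tpath H lam s t vs es'"
  shows "gsize G \<le> gsize H"
proof -
  have ce: "counter_example G lam s t" using m by (simp add: min_counter_example_def)
  then have wf: "wf_mgraph G" and st: "s \<noteq> t" "\<not> adj G s t"
    and gap: "p_num G lam s t < c_num G lam s t" by (simp_all add: counter_example_def)
  have na_H: "\<not> adj H s t" using st(2) adj_subgraph[OF H] by blast
  obtain S where S: "temporal_cut H lam s t S" "card S = c_num H lam s t"
    using c_num_attained[OF st(1) na_H] .
  have "p_num H lam s t \<le> p_num G lam s t" using p_num_subgraph_le[OF wf st H] .
  also have "\<dots> < c_num G lam s t" using gap .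
  also have "\<dots> \<le> c_num H lam s t"
    using c_num_le_card[OF temporal_cut_subgraph[OF H S(1) keep]] S(2) by simp
  finally have "counter_example H lam s t"
    using ce st_H na_H wf_mgraph_subgraph[OF wf H] temporal_labelling_subgraph[OF _ H]
      m_top_minor_subgraph[OF H] by (auto simp: counter_example_def)
  then show ?thesis using m unfolding min_counter_example_def by blast
qed

lemma counter_example_has_tpath:
  assumes "counter_example G lam s t"
  obtains vs es where "tpath G lam s t vs es"
proof -
  have "\<exists>vs es. tpath G lam s t vs es"
  proof (rule ccontr)
    assume "\<nexists>vs es. tpath G lam s t vs es"
    then have "temporal_cut G lam s t {}"
      by (simp add: temporal_cut_def tpath_del_verts_iff)
    then show False using c_num_le_card assms by (fastforce simp: counter_example_def)
  qed
  then show ?thesis using that by blast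
qed

lemma min_counter_example_cut_card:
  assumes m: "min_counter_example G lam s t" and cut: "temporal_cut G lam s t S"
  shows "2 \<le> card S"
proof -
  have ce: "counter_example G lam s t" using m by (simp add: min_counter_example_def)
  then have wf: "wf_mgraph G" and st: "s \<noteq> t" "\<not> adj G s t"
    and gap: "p_num G lam s t < c_num G lam s t" by (simp_all add: counter_example_def)
  obtain vs es where "tpath G lam s t vs es" using counter_example_has_tpath[OF ce] .
  then have "1 \<le> p_num G lam s t" using p_num_ge_1[OF wf st] by blast
  then show ?thesis using gap c_num_le_card[OF cut] by linarith
qed

lemma min_counter_example_vertex_on_tpath:
  assumes m: "min_counter_example G lam s t" and z: "z \<in> verts G"
  obtains vs es where "tpath G lam s t vs es" "z \<in> set vs"
proof -
  have ce: "counter_example G lam s t" using m by (simp add: min_counter_example_def)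
  then have wf: "wf_mgraph G" and st: "s \<in> verts G" "t \<in> verts G"
    by (simp_all add: counter_example_def)
  have "\<exists>vs es. tpath G lam s t vs es \<and> z \<in> set vs"
  proof (rule ccontr)
    assume avoid: "\<not> ?thesis"
    obtain vs es where "tpath G lam s t vs es" using counter_example_has_tpath[OF ce] .
    then have "s \<in> set vs" "t \<in> set vs" by (auto simp: tpath_def dest: hd_in_set last_in_set)
    then have "z \<noteq> s" "z \<noteq> t" using avoid \<open>tpath G lam s t vs es\<close> by auto
    have "gsize G \<le> gsize (del_verts G {z})"
    proof (rule min_counter_example_gsize_le[OF m subgraph_del_verts[OF wf]])
      show "s \<in> verts (del_verts G {z})" "t \<in> verts (del_verts G {z})"
        using st \<open>z \<noteq> s\<close> \<open>z \<noteq> t\<close> by (auto simp: del_verts_def)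
      show "\<exists>es'. tpath (del_verts G {z}) lam s t vs es'" if "tpath G lam s t vs es" for vs es
        using that avoid by (auto simp: tpath_del_verts_iff)
    qed
    then show False using gsize_del_vertex[OF wf z] by simp
  qed
  then show ?thesis using that by blast
qed

definition adj_in :: "mgraph \<Rightarrow> nat set \<Rightarrow> nat \<Rightarrow> nat \<Rightarrow> bool" where
  "adj_in G W a b \<longleftrightarrow> a \<in> W \<and> b \<in> W \<and> adj G a b"

lemma connected_on_adj_in: "connected_on G W \<longleftrightarrow> (\<forall>x\<in>W. \<forall>y\<in>W. (adj_in G W)\<^sup>*\<^sup>* x y)"
  by (simp add: connected_on_def adj_in_def[abs_def])

lemma symp_adj_in: "symp (adj_in G W)"
  by (auto intro!: sympI simp: adj_in_def adj_def insert_commute)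

lemma adj_in_rtranclp_sym: "(adj_in G W)\<^sup>*\<^sup>* a b \<Longrightarrow> (adj_in G W)\<^sup>*\<^sup>* b a"
  using sympD[OF symp_rtranclp[OF symp_adj_in]] .

lemma tpath_segment_connected:
  assumes tp: "tpath G lam s t vs es" and ij: "i \<le> j" "j < length vs"
    and W: "\<And>k. i \<le> k \<Longrightarrow> k \<le> j \<Longrightarrow> vs ! k \<in> W"
  shows "(adj_in G W)\<^sup>*\<^sup>* (vs ! i) (vs ! j)"
  using ij
proof (induction j rule: dec_induct)
  case (step n)
  then have "n < length es" using tp by (simp add: tpath_def)
  then have "es ! n \<in> edges G" "ends G (es ! n) = {vs ! n, vs ! Suc n}"
    using tp by (auto simp: tpath_def)
  then have "adj G (vs ! n) (vs ! Suc n)" by (auto simp: adj_def)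
  then have "adj_in G W (vs ! n) (vs ! Suc n)" using W step by (simp add: adj_in_def)
  moreover have "(adj_in G W)\<^sup>*\<^sup>* (vs ! i) (vs ! n)" using step by simp
  ultimately show ?case by (rule rtranclp.rtrancl_into_rtrancl[rotated])
qed simp

lemma tpath_vertex_joined_to_end:
  assumes tp: "tpath G lam s t vs es" and z: "z \<in> set vs" "z \<noteq> v"
  shows "\<exists>u\<in>{s, t} - {v}. (adj_in G (verts G - {v}))\<^sup>*\<^sup>* u z"
proof -
  let ?W = "verts G - {v}"
  have d: "distinct vs" "set vs \<subseteq> verts G" using tp by (auto simp: tpath_def)
  obtain i where i: "i < length vs" "vs ! i = z" using z(1) by (auto simp: in_set_conv_nth)
  have inW: "vs ! k \<in> ?W" if "k < length vs" "vs ! k \<noteq> v" for k using that d nth_mem by blast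
  show ?thesis
  proof (cases "\<forall>k\<le>i. vs ! k \<noteq> v")
    case True
    then have "(adj_in G ?W)\<^sup>*\<^sup>* (vs ! 0) (vs ! i)"
      using i inW by (intro tpath_segment_connected[OF tp]) auto
    then show ?thesis using True tpath_first_last(1)[OF tp] i by auto
  next
    \<comment> \<open>v occurs before z, so by distinctness not after it\<close>
    case False
    then obtain k where k: "k \<le> i" "vs ! k = v" by blast
    have after: "vs ! k' \<noteq> v" if "i \<le> k'" "k' < length vs" for k'
      using that k i z(2) nth_eq_iff_index_eq[OF d(1), of k' k] by auto
    have "(adj_in G ?W)\<^sup>*\<^sup>* (vs ! i) (vs ! (length vs - 1))"
      using i inW after by (intro tpath_segment_connected[OF tp]) auto
    moreover have "vs ! (length vs - 1) \<noteq> v" using after i by simp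
    ultimately have "t \<in> {s, t} - {v}" "(adj_in G ?W)\<^sup>*\<^sup>* t z"
      using tpath_first_last(2)[OF tp] i adj_in_rtranclp_sym by auto
    then show ?thesis by blast
  qed
qed

lemma min_counter_example_tpath_avoiding:
  assumes m: "min_counter_example G lam s t" and v: "v \<noteq> s" "v \<noteq> t"
  obtains vs es where "tpath G lam s t vs es" "v \<notin> set vs"
proof (cases "v \<in> verts G")
  case True
  have "\<not> temporal_cut G lam s t {v}" using min_counter_example_cut_card[OF m] by fastforce
  then show ?thesis using that True v by (auto simp: temporal_cut_def tpath_del_verts_iff)
next
  case False
  have "counter_example G lam s t" using m by (simp add: min_counter_example_def)
  then obtain vs es where "tpath G lam s t vs es" by (rule counter_example_has_tpath)
  then show ?thesis using that False by (auto simp: tpath_def)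
qed

lemma min_counter_example_connected_minus_vertex:
  assumes m: "min_counter_example G lam s t"
  shows "connected_on G (verts G - {v})"
  unfolding connected_on_adj_in
proof (intro ballI)
  let ?R = "adj_in G (verts G - {v})"
  have joined: "\<exists>u\<in>{s, t} - {v}. ?R\<^sup>*\<^sup>* u z" if z: "z \<in> verts G - {v}" for z
  proof -
    obtain vs es where "tpath G lam s t vs es" "z \<in> set vs"
      using min_counter_example_vertex_on_tpath[OF m] z by blast
    then show ?thesis using tpath_vertex_joined_to_end z by blast
  qed
  have ends_joined: "?R\<^sup>*\<^sup>* s t" if v: "v \<noteq> s" "v \<noteq> t"
  proof -
    obtain vs es where tp: "tpath G lam s t vs es" "v \<notin> set vs"
      using min_counter_example_tpath_avoiding[OF m v] .
    then have "?R\<^sup>*\<^sup>* (vs ! 0) (vs ! (length vs - 1))"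
      by (intro tpath_segment_connected) (auto simp: tpath_def)
    then show ?thesis using tpath_first_last[OF tp(1)] by simp
  qed
  fix x y assume "x \<in> verts G - {v}" "y \<in> verts G - {v}"
  then obtain a b where "a \<in> {s, t} - {v}" "b \<in> {s, t} - {v}" "?R\<^sup>*\<^sup>* a x" "?R\<^sup>*\<^sup>* b y"
    using joined by blast
  moreover have "?R\<^sup>*\<^sup>* a b" using calculation(1,2) ends_joined adj_in_rtranclp_sym by auto
  ultimately show "?R\<^sup>*\<^sup>* x y" by (meson adj_in_rtranclp_sym rtranclp_trans)
qed

lemma min_counter_example_two_connected:
  assumes m: "min_counter_example G lam s t"
  shows "two_connected G"
proof -
  have ce: "counter_example G lam s t" using m by (simp add: min_counter_example_def)
  then have fin: "finite (verts G)" and st: "s \<noteq> t" "\<not> adj G s t"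
    by (simp_all add: counter_example_def wf_mgraph_def)
  obtain vs es where tp: "tpath G lam s t vs es" using counter_example_has_tpath[OF ce] .
  have d: "distinct vs" "set vs \<subseteq> verts G" using tp by (auto simp: tpath_def)
  have "3 \<le> length vs" using tpath_length_ge_3[OF tp st] .
  also have "length vs = card (set vs)" using d by (simp add: distinct_card)
  also have "\<dots> \<le> card (verts G)" using d fin by (simp add: card_mono)
  finally have "3 \<le> card (verts G)" .
  moreover obtain v where "v \<notin> verts G" using ex_new_if_finite[OF infinite_UNIV_nat fin] by blast
  then have "verts G - {v} = verts G" by simp
  then have "connected_on G (verts G)"
    using min_counter_example_connected_minus_vertex[OF m, of v] by simp
  ultimately show ?thesis
    unfolding two_connected_def using min_counter_example_connected_minus_vertex[OF m] by blast
qed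

lemma tpath_edge_at_source:
  assumes tp: "tpath G lam s t vs es" and i: "i < length es" and "s \<in> ends G (es ! i)"
  shows "i = 0"
proof -
  have "ends G (es ! i) = {vs ! i, vs ! Suc i}" "Suc i < length vs" using tp i by (auto simp: tpath_def)
  then show ?thesis
    using assms(3) tpath_nth_eq_source[OF tp, of i] tpath_nth_eq_source[OF tp, of "Suc i"] by auto
qed

lemma tpath_edge_at_target:
  assumes tp: "tpath G lam s t vs es" and i: "i < length es" and "t \<in> ends G (es ! i)"
  shows "i = length es - 1"
proof -
  have "ends G (es ! i) = {vs ! i, vs ! Suc i}" "length vs = Suc (length es)"
    using tp i by (auto simp: tpath_def)
  then show ?thesis
    using assms(3) i tpath_nth_eq_target[OF tp, of i] tpath_nth_eq_target[OF tp, of "Suc i"] by auto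
qed

lemma sorted_change_first_last:
  fixes xs ys :: "'a::linorder list"
  assumes "sorted xs" "length ys = length xs"
    and change: "\<And>k. k < length xs \<Longrightarrow>
      ys ! k = xs ! k \<or> (k = 0 \<and> ys ! k \<le> xs ! k) \<or> (k = length xs - 1 \<and> xs ! k \<le> ys ! k)"
  shows "sorted ys"
  unfolding sorted_iff_nth_mono
proof (intro allI impI)
  fix i j assume ij: "i \<le> j" "j < length ys"
  show "ys ! i \<le> ys ! j"
  proof (cases "i = j")
    case False
    then have "ys ! i \<le> xs ! i" "xs ! j \<le> ys ! j" using change[of i] change[of j] ij assms(2) by auto
    moreover have "xs ! i \<le> xs ! j" using assms(1,2) ij by (simp add: sorted_iff_nth_mono)
    ultimately show ?thesis by (meson order_trans)
  qed simp
qed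

lemma tpath_exchange_parallel_edge:
  assumes tp: "tpath G lam s t vs es"
    and e0: "e0 \<in> edges G" "e0 \<noteq> e1" "ends G e0 = ends G e1"
    and where_e1: "\<And>i. i < length es \<Longrightarrow> es ! i = e1 \<Longrightarrow>
       (i = 0 \<and> lam e0 \<le> lam e1) \<or> (i = length es - 1 \<and> lam e1 \<le> lam e0)"
  shows "tpath (G\<lparr>edges := edges G - {e1}\<rparr>) lam s t vs (map (\<lambda>e. if e = e1 then e0 else e) es)"
proof -
  let ?es = "map (\<lambda>e. if e = e1 then e0 else e) es"
  have "sorted (map lam ?es)"
    by (rule sorted_change_first_last[of "map lam es"]) (use tp where_e1 in \<open>auto simp: tpath_def\<close>)
  moreover have "set ?es \<subseteq> edges G - {e1}" using tp e0 by (auto simp: tpath_def)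
  moreover have "\<forall>i < length es. ends G (?es ! i) = {vs ! i, vs ! Suc i}"
    using tp e0 by (auto simp: tpath_def)
  ultimately show ?thesis using tp by (simp add: tpath_def)
qed

lemma min_counter_example_no_redundant_parallel_edge:
  assumes m: "min_counter_example G lam s t"
    and e: "e0 \<in> edges G" "e1 \<in> edges G" "e0 \<noteq> e1" "ends G e0 = ends G e1"
    and terminal: "(s \<in> ends G e1 \<and> lam e0 \<le> lam e1) \<or> (t \<in> ends G e1 \<and> lam e1 \<le> lam e0)"
  shows False
proof -
  let ?H = "G\<lparr>edges := edges G - {e1}\<rparr>"
  have wf: "wf_mgraph G" and st: "s \<in> verts G" "t \<in> verts G"
    using m by (simp_all add: min_counter_example_def counter_example_def)
  have "gsize G \<le> gsize ?H"
  proof (rule min_counter_example_gsize_le[OF m subgraph_del_edge[OF wf]])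
    show "s \<in> verts ?H" "t \<in> verts ?H" using st by simp_all
    fix vs es assume tp: "tpath G lam s t vs es"
    have "tpath ?H lam s t vs (map (\<lambda>e. if e = e1 then e0 else e) es)"
      using tpath_exchange_parallel_edge[OF tp e(1,3,4)] terminal
        tpath_edge_at_source[OF tp] tpath_edge_at_target[OF tp] by blast
    then show "\<exists>es'. tpath ?H lam s t vs es'" by blast
  qed
  then show False using gsize_del_edge[OF wf e(2)] by simp
qed

lemma min_counter_example_mult_terminal:
  assumes m: "min_counter_example G lam s t" and x: "x \<in> {s, t}" and "1 \<le> mult G x y"
  shows "mult G x y = 1"
proof (rule ccontr)
  define E where "E = {e \<in> edges G. ends G e = {x, y}}"
  assume "mult G x y \<noteq> 1"
  then have "\<not> card E \<le> Suc 0" using assms(3) by (simp add: mult_def E_def)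
  moreover have "finite E"
    using m by (simp add: E_def min_counter_example_def counter_example_def wf_mgraph_def)
  ultimately obtain a b where ab: "a \<in> E" "b \<in> E" "a \<noteq> b" "lam a \<le> lam b"
    by (metis card_le_Suc0_iff_eq nat_le_linear)
  then have "a \<in> edges G" "b \<in> edges G" "ends G a = {x, y}" "ends G b = {x, y}"
    by (simp_all add: E_def)
  then show False
    using min_counter_example_no_redundant_parallel_edge[OF m, of a b]
      min_counter_example_no_redundant_parallel_edge[OF m, of b a] ab x by auto
qed

theorem lemma5:
  assumes "min_counter_example G lam s t"
  shows "two_connected G \<and>
         (\<forall>x\<in>{s, t}. \<forall>y. mult G x y \<ge> 1 \<longrightarrow> mult G x y = 1)"
  using min_counter_example_two_connected[OF assms] min_counter_example_mult_terminal[OF assms]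
  by blast

end
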